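(* Let $(\Omega_X,\mathcal{F}_X)$ and $(\Omega_y,\mathcal{F}_y)$ be measurable spaces and $\pi$ a probability measure on $(\Omega_X\times\Omega_y,\mathcal{F}_X\otimes\mathcal{F}_y)$. Let $s:\Omega_X\times\Omega_y\to\mathbb{R}$ be a measurable score function, $N\ge1$, $\alpha\in[0,1]$, and let $(X_1,y_1),\dots,(X_N,y_N),(X,y)$ be i.i.d. with law $\pi$. Let $\hat q$ be the $\lceil(1-\alpha)(N+1)\rceil$-th smallest value among $s(X_1,y_1),\dots,s(X_N,y_N)$ (with $\hat q=+\infty$ if $\lceil(1-\alpha)(N+1)\rceil>N$), and let $S^{\alpha}(x)=\{y'\in\Omega_y: s(x,y')\le\hat q\}$. Suppose the mutual information $\mathrm{MI}(X,s)$ between $X$ and $s(X,y)$ (with $(X,y)\sim\pi$) is finite, and let $\rho\in(0,1]$. Then for every $\omega_X\in\mathcal{F}_X$ with $\mathbb{P}(X\in\omega_X)>\rho$, $$\mathbb{P}\big(y\in S^{\alpha}(X)\,\big|\,X\in\omega_X\big)\ge 1-\tilde\alpha,\qquad\text{where }\tilde\alpha=\alpha+\frac{\sqrt{1-e^{-\mathrm{MI}(X,s)}}}{\rho},$$ the probability being taken jointly over the calibration data and the test point.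
   Context: Split-conformal setting: any model entering $s$ is fixed and independent of the calibration and test data; calibration points and test point are i.i.d. from $\pi$; coverage probabilities are marginalized over the calibration data. *)

theory Defs
  imports "HOL-Probability.Probability"
begin

text \<open>Rank index k = ceil((1 - alpha)(N+1)) as a natural number (it is >= 0 for alpha <= 1).\<close>
definition conf_rank :: "real \<Rightarrow> nat \<Rightarrow> nat" where
  "conf_rank \<alpha> N = nat \<lceil>(1 - \<alpha>) * (real N + 1)\<rceil>"

text \<open>Degenerate case k = 0 (only possible for alpha = 1): -infinity (empty set).\<close>
definition conf_quantile :: "real \<Rightarrow> nat \<Rightarrow> (nat \<Rightarrow> real) \<Rightarrow> ereal" where
  "conf_quantile \<alpha> N sc =
     (let k = conf_rank \<alpha> N in
      if k > N then \<infinity>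
      else if k = 0 then -\<infinity>
      else ereal (sort (map sc [0..<N]) ! (k - 1)))"

definition conf_set :: "('x \<times> 'y \<Rightarrow> real) \<Rightarrow> 'y measure \<Rightarrow> real \<Rightarrow> nat \<Rightarrow>
    (nat \<Rightarrow> 'x \<times> 'y) \<Rightarrow> 'x \<Rightarrow> 'y set" where
  "conf_set s MY \<alpha> N z x =
     {y' \<in> space MY. ereal (s (x, y')) \<le> conf_quantile \<alpha> N (\<lambda>i. s (z i))}"

text \<open>Finiteness of the mutual information MI(X,Y) (as in the library lemma
  mutual_information_indep_vars): the joint law is absolutely continuous w.r.t.
  the product of marginals and the log-density is integrable.\<close>
definition (in prob_space) finite_mutual_information ::
    "real \<Rightarrow> 'b measure \<Rightarrow> 'c measure \<Rightarrow> ('a \<Rightarrow> 'b) \<Rightarrow> ('a \<Rightarrow> 'c) \<Rightarrow> bool" where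
  "finite_mutual_information b S T X Y \<longleftrightarrow>
     absolutely_continuous (distr M S X \<Otimes>\<^sub>M distr M T Y) (distr M (S \<Otimes>\<^sub>M T) (\<lambda>x. (X x, Y x))) \<and>
     integrable (distr M (S \<Otimes>\<^sub>M T) (\<lambda>x. (X x, Y x)))
       (entropy_density b (distr M S X \<Otimes>\<^sub>M distr M T Y) (distr M (S \<Otimes>\<^sub>M T) (\<lambda>x. (X x, Y x))))"

end

theory Submission
  imports Defs
begin

(* Applied to the joint law of (X, s(X,y)) and the product of its marginals, the
   Bretagnolle-Huber inequality |J(E) - Q(E)| <= sqrt(1 - exp(-KL(J || Q))) turns finite mutual
   information into approximate independence of the events "X in omega" and "s in B":
   P(X in omega) P(s in B) <= P(X in omega, s in B) + D with D = sqrt(1 - exp(-MI)).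
   Given the calibration data, the test point is covered exactly when fewer than
   k = ceil((1 - alpha)(N + 1)) calibration scores lie strictly below its score, i.e. when its
   score lies in a Borel set determined by the calibration scores; integrating over the calibration
   data gives P(X in omega) P(covered) <= P(X in omega, covered) + D. By exchangeability of the
   N + 1 scores, P(covered) >= k / (N + 1) >= 1 - alpha, and dividing by P(X in omega) > rho gives
   the bound. Bretagnolle-Huber itself comes from the Bhattacharyya coefficient of J and Q: it is at
   least exp(-KL/2) by convexity of exp, and at most sqrt(ab) + sqrt((1-a)(1-b)) for a = J(E),
   b = Q(E) by Cauchy-Schwarz on E and on its complement. *)

lemma le_sqrt_mult_if_le_arith_means:
  fixes I a b :: real
  assumes le: "\<And>t. t > 0 \<Longrightarrow> I \<le> (t * a + b / t) / 2" and "0 \<le> a" "0 \<le> b"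
  shows "I \<le> sqrt (a * b)"
proof (rule ccontr)
  assume "\<not> I \<le> sqrt (a * b)"
  then have I: "sqrt (a * b) < I" by simp
  then have "0 < I" by (smt (verit) real_sqrt_ge_zero assms(2,3) mult_nonneg_nonneg)
  consider "0 < a" "0 < b" | "a = 0" | "0 < a" "b = 0" using assms(2,3) by linarith
  then show False
  proof cases
    case 1
    have "I \<le> (sqrt (b / a) * a + b / sqrt (b / a)) / 2" using 1 by (intro le) simp
    also have "\<dots> = sqrt (a * b)"
      using 1 by (simp add: real_sqrt_divide real_sqrt_mult field_simps)
    finally show False using I by simp
  next
    case 2
    have "I \<le> b / (b / I + 1) / 2" using le[of "b / I + 1"] 2 \<open>0 < I\<close> assms(3)
      by (simp add: add_nonneg_pos)
    also have "\<dots> < I" using \<open>0 < I\<close> assms(3) by (auto simp: field_simps intro!: add_nonneg_pos)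
    finally show False by simp
  next
    case 3
    show False using le[of "I / a"] 3 \<open>0 < I\<close> by simp
  qed
qed

lemma square_diff_le_of_le_Bhattacharyya:
  fixes a b E :: real
  assumes "0 \<le> a" "a \<le> 1" "0 \<le> b" "b \<le> 1" "0 \<le> E"
    and E: "E \<le> sqrt (a * b) + sqrt ((1 - a) * (1 - b))"
  shows "(a - b)\<^sup>2 \<le> 1 - E\<^sup>2"
proof -
  define x1 x2 y1 y2 where roots: "x1 = sqrt a" "x2 = sqrt (1 - a)" "y1 = sqrt b" "y2 = sqrt (1 - b)"
  have sq: "x1\<^sup>2 = a" "x2\<^sup>2 = 1 - a" "y1\<^sup>2 = b" "y2\<^sup>2 = 1 - b"
    using assms unfolding roots by simp_all
  have E': "E \<le> x1 * y1 + x2 * y2"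
    using E unfolding roots by (simp add: real_sqrt_mult)
  \<comment> \<open>Lagrange's identity with the unit vectors (x1, x2) and (y1, y2)\<close>
  have "(x1 * y1 + x2 * y2)\<^sup>2 + (x1 * y2 - x2 * y1)\<^sup>2 = (x1\<^sup>2 + x2\<^sup>2) * (y1\<^sup>2 + y2\<^sup>2)"
    "(x1 * y2 + x2 * y1)\<^sup>2 + (x1 * y1 - x2 * y2)\<^sup>2 = (x1\<^sup>2 + x2\<^sup>2) * (y1\<^sup>2 + y2\<^sup>2)"
    by algebra+
  then have lag: "(x1 * y1 + x2 * y2)\<^sup>2 + (x1 * y2 - x2 * y1)\<^sup>2 = 1"
    and le1: "(x1 * y2 + x2 * y1)\<^sup>2 \<le> 1"
    unfolding sq by simp_all (smt (verit) zero_le_power2)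
  have "a - b = (x1 * y2 - x2 * y1) * (x1 * y2 + x2 * y1)"
  proof -
    have "(x1 * y2 - x2 * y1) * (x1 * y2 + x2 * y1) = x1\<^sup>2 * y2\<^sup>2 - x2\<^sup>2 * y1\<^sup>2" by algebra
    then show ?thesis unfolding sq by (simp add: algebra_simps)
  qed
  then have "(a - b)\<^sup>2 = (x1 * y2 - x2 * y1)\<^sup>2 * (x1 * y2 + x2 * y1)\<^sup>2"
    by (simp add: power_mult_distrib)
  also have "\<dots> \<le> (x1 * y2 - x2 * y1)\<^sup>2" using le1 by (simp add: mult_left_le)
  also have "\<dots> = 1 - (x1 * y1 + x2 * y2)\<^sup>2" using lag by simp
  also have "\<dots> \<le> 1 - E\<^sup>2" using E' \<open>0 \<le> E\<close> by (simp add: power_mono)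
  finally show ?thesis .
qed

lemma exp_tangent_le_sqrt:
  fixes y K :: real
  assumes "0 \<le> y"
  shows "y * exp (- K / 2) * (1 + K / 2 - ln y / 2) \<le> sqrt y"
  \<comment> \<open>exp u \<ge> 1 + u at u = (K - ln y) / 2, multiplied by y exp (- K / 2)\<close>
proof (cases "y = 0")
  case False
  then have y: "0 < y" using assms by simp
  have "exp (- K / 2) * (1 + K / 2 - ln y / 2) \<le> exp (- K / 2) * exp (K / 2 - ln y / 2)"
    using exp_ge_add_one_self[of "K / 2 - ln y / 2"] by (intro mult_left_mono) (simp_all add: algebra_simps)
  also have "\<dots> = exp (- (ln y / 2))" by (simp flip: exp_add)
  also have "\<dots> = 1 / sqrt y" using y by (simp add: exp_minus ln_sqrt[symmetric] inverse_eq_divide)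
  finally have "y * (exp (- K / 2) * (1 + K / 2 - ln y / 2)) \<le> y * (1 / sqrt y)"
    using y by (intro mult_left_mono) simp_all
  also have "\<dots> = sqrt y" using y by (simp add: real_div_sqrt)
  finally show ?thesis by (simp add: mult.assoc)
qed simp

lemma integrable_sqrt:
  fixes g :: "'a \<Rightarrow> real"
  assumes "finite_measure Q" "\<And>x. 0 \<le> g x" "integrable Q g"
  shows "integrable Q (\<lambda>x. sqrt (g x))"
proof (rule Bochner_Integration.integrable_bound)
  interpret finite_measure Q by fact
  show "integrable Q (\<lambda>x. 1 + g x)" using assms(3) by simp
  show "(\<lambda>x. sqrt (g x)) \<in> borel_measurable Q" using assms(3) by measurable
  have "sqrt y \<le> 1 + y" if "0 \<le> y" for y :: real
  proof -
    have "0 \<le> (sqrt y - 1)\<^sup>2" by simp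
    then show ?thesis using that by (simp add: power2_eq_square algebra_simps)
  qed
  then show "AE x in Q. norm (sqrt (g x)) \<le> norm (1 + g x)" using assms(2) by auto
qed

lemma exp_neg_half_entropy_le_integral_sqrt:
  fixes g :: "'a \<Rightarrow> real"
  assumes Q: "prob_space Q" and g: "\<And>x. 0 \<le> g x" "integrable Q g" "integral\<^sup>L Q g = 1"
    and gln: "integrable Q (\<lambda>x. g x * ln (g x))"
  shows "exp (- (\<integral>x. g x * ln (g x) \<partial>Q) / 2) \<le> (\<integral>x. sqrt (g x) \<partial>Q)"
proof -
  interpret prob_space Q by fact
  define K where "K = (\<integral>x. g x * ln (g x) \<partial>Q)"
  define c where "c = exp (- K / 2)"
  have tangent: "(\<lambda>x. g x * c * (1 + K / 2 - ln (g x) / 2))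
      = (\<lambda>x. c * ((1 + K / 2) * g x - g x * ln (g x) / 2))"
    by (auto simp: algebra_simps)
  have "c = (\<integral>x. g x * c * (1 + K / 2 - ln (g x) / 2) \<partial>Q)"
    unfolding tangent using g gln by (simp add: K_def algebra_simps)
  also have "\<dots> \<le> (\<integral>x. sqrt (g x) \<partial>Q)"
    using g gln exp_tangent_le_sqrt[OF g(1), of _ K] unfolding c_def[symmetric]
    by (intro integral_mono integrable_sqrt[OF finite_measure_axioms]) (simp_all add: tangent)
  finally show ?thesis unfolding c_def K_def .
qed

lemma integral_sqrt_indicator_le:
  fixes g :: "'a \<Rightarrow> real"
  assumes Q: "finite_measure Q" and g: "\<And>x. 0 \<le> g x" "integrable Q g" and B: "B \<in> sets Q"
  shows "(\<integral>x. sqrt (g x) * indicator B x \<partial>Q) \<le> sqrt ((\<integral>x. g x * indicator B x \<partial>Q) * measure Q B)"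
proof (rule le_sqrt_mult_if_le_arith_means)
  interpret finite_measure Q by fact
  fix t :: real assume t: "0 < t"
  have amgm: "sqrt y \<le> (t * y + 1 / t) / 2" if "0 \<le> y" for y
  proof -
    have "0 \<le> (t * sqrt y - 1)\<^sup>2 / t" using t by simp
    also have "\<dots> = t * y + 1 / t - 2 * sqrt y"
      using t that by (simp add: power2_eq_square field_simps)
    finally show ?thesis by simp
  qed
  have int: "integrable Q (\<lambda>x. g x * indicator B x)" "integrable Q (\<lambda>x. indicator B x :: real)"
      "integrable Q (\<lambda>x. sqrt (g x) * indicator B x)"
    using integrable_mult_indicator[OF B g(2)] integrable_mult_indicator[OF B integrable_sqrt[OF Q g]] B
    by (simp_all add: mult.commute emeasure_finite less_top[symmetric] integrable_real_indicator)
  have "(\<integral>x. sqrt (g x) * indicator B x \<partial>Q)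
      \<le> (\<integral>x. (t * (g x * indicator B x) + indicator B x / t) / 2 \<partial>Q)"
    using int amgm g by (intro integral_mono) (auto split: split_indicator)
  also have "\<dots> = (t * (\<integral>x. g x * indicator B x \<partial>Q) + measure Q B / t) / 2"
    using int B by simp
  finally show "(\<integral>x. sqrt (g x) * indicator B x \<partial>Q)
      \<le> (t * (\<integral>x. g x * indicator B x \<partial>Q) + measure Q B / t) / 2" .
qed (use g in \<open>auto intro: integral_nonneg_AE\<close>)

lemma Bretagnolle_Huber_density:
  fixes g :: "'a \<Rightarrow> real"
  assumes Q: "prob_space Q" and J: "prob_space (density Q g)"
    and g: "\<And>x. 0 \<le> g x" "g \<in> borel_measurable Q" and gln: "integrable Q (\<lambda>x. g x * ln (g x))"
    and A: "A \<in> sets Q"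
  shows "\<bar>measure (density Q g) A - measure Q A\<bar> \<le> sqrt (1 - exp (- (\<integral>x. g x * ln (g x) \<partial>Q)))"
proof -
  interpret Q: prob_space Q by fact
  interpret J: prob_space "density Q g" by fact
  define K where "K = (\<integral>x. g x * ln (g x) \<partial>Q)"
  have g_int: "integrable Q g" and g_total: "integral\<^sup>L Q g = 1"
    using integrable_density[of "\<lambda>_. 1::real" Q g] integral_density[of "\<lambda>_. 1::real" Q g] g
    by (simp_all add: J.prob_space[unfolded space_density])
  have J_measure: "measure (density Q g) B = (\<integral>x. g x * indicator B x \<partial>Q)" if "B \<in> sets Q" for B
    using integral_density[of "indicator B :: _ \<Rightarrow> real" Q g] that g
    by (simp add: Int_absorb2 sets.sets_into_space)
  define a where "a = measure (density Q g) A"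
  define b where "b = measure Q A"
  have Ac: "space Q - A \<in> sets Q" using A by auto
  have compl: "measure (density Q g) (space Q - A) = 1 - a" "measure Q (space Q - A) = 1 - b"
    using J.prob_compl[of A] Q.prob_compl[of A] A by (simp_all add: a_def b_def)
  have sqrt_int: "integrable Q (\<lambda>x. sqrt (g x))"
    using Q.finite_measure_axioms g(1) g_int by (rule integrable_sqrt)
  \<comment> \<open>Cauchy-Schwarz on A and on its complement\<close>
  define BC where "BC = (\<integral>x. sqrt (g x) \<partial>Q)"
  have "BC = (\<integral>x. sqrt (g x) * indicator A x + sqrt (g x) * indicator (space Q - A) x \<partial>Q)"
    unfolding BC_def by (intro Bochner_Integration.integral_cong) (auto split: split_indicator)
  also have "\<dots> = (\<integral>x. sqrt (g x) * indicator A x \<partial>Q) + (\<integral>x. sqrt (g x) * indicator (space Q - A) x \<partial>Q)"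
    using integrable_mult_indicator[OF A sqrt_int] integrable_mult_indicator[OF Ac sqrt_int]
    by (intro Bochner_Integration.integral_add) (simp_all add: mult.commute)
  also have "\<dots> \<le> sqrt (a * b) + sqrt ((1 - a) * (1 - b))"
    using integral_sqrt_indicator_le[OF Q.finite_measure_axioms g(1) g_int A]
      integral_sqrt_indicator_le[OF Q.finite_measure_axioms g(1) g_int Ac]
    unfolding J_measure[OF A, symmetric] J_measure[OF Ac, symmetric] compl a_def b_def
    by (rule add_mono)
  finally have BC_le: "BC \<le> sqrt (a * b) + sqrt ((1 - a) * (1 - b))" .
  have BC_ge: "exp (- K / 2) \<le> BC"
    unfolding BC_def K_def using g(1) g_int g_total gln by (rule exp_neg_half_entropy_le_integral_sqrt[OF Q])
  have "(a - b)\<^sup>2 \<le> 1 - BC\<^sup>2"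
    using square_diff_le_of_le_Bhattacharyya[OF _ _ _ _ order_trans[OF exp_ge_zero BC_ge] BC_le]
    by (simp add: a_def b_def)
  also have "\<dots> \<le> 1 - (exp (- K / 2))\<^sup>2"
    using BC_ge by (simp add: power_mono)
  also have "(exp (- K / 2))\<^sup>2 = exp (- K)"
    by (simp flip: exp_of_nat_mult)
  finally have "sqrt ((a - b)\<^sup>2) \<le> sqrt (1 - exp (- K))"
    by (rule real_sqrt_le_mono)
  then show ?thesis by (simp add: a_def b_def K_def)
qed

lemma Bretagnolle_Huber_inequality:
  fixes Q J :: "'a measure"
  assumes Q: "prob_space Q" and J: "prob_space J" and sJ: "sets J = sets Q"
    and ac: "absolutely_continuous Q J" and int: "integrable J (entropy_density (exp 1) Q J)"
    and A: "A \<in> sets Q"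
  shows "\<bar>measure J A - measure Q A\<bar> \<le> sqrt (1 - exp (- KL_divergence (exp 1) Q J))"
proof -
  interpret Q: prob_space Q by fact
  interpret J: prob_space J by fact
  define g where "g x = enn2real (RN_deriv Q J x)" for x
  have g_nonneg: "0 \<le> g x" for x unfolding g_def by simp
  have g_meas[measurable]: "g \<in> borel_measurable Q" unfolding g_def by measurable
  have "AE x in Q. RN_deriv Q J x \<noteq> \<infinity>"
    by (rule Q.RN_deriv_finite[OF _ ac sJ]) unfold_locales
  then have "density Q (RN_deriv Q J) = density Q (\<lambda>x. ennreal (g x))"
    by (intro density_cong) (auto simp: g_def less_top[symmetric] intro!: ennreal_enn2real[symmetric])
  then have J_density: "J = density Q (\<lambda>x. ennreal (g x))"
    using Q.density_RN_deriv[OF ac sJ] by simp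
  have ln_g: "entropy_density (exp 1) Q J = (\<lambda>x. ln (g x))"
    by (simp add: fun_eq_iff entropy_density_def g_def log_def)
  have "integrable Q (\<lambda>x. g x * ln (g x))" and "KL_divergence (exp 1) Q J = (\<integral>x. g x * ln (g x) \<partial>Q)"
    using int integrable_density[of "\<lambda>x. ln (g x)" Q g] integral_density[of "\<lambda>x. ln (g x)" Q g]
    by (simp_all add: J_density[symmetric] g_nonneg ln_g KL_divergence_def)
  then show ?thesis
    using Bretagnolle_Huber_density[OF Q _ g_nonneg g_meas _ A] J J_density by simp
qed

lemma (in prob_space) prob_joint_minus_product_le_mutual_information:
  assumes X: "X \<in> measurable M S" and Y: "Y \<in> measurable M T"
    and MI: "finite_mutual_information (exp 1) S T X Y"
    and A: "A \<in> sets S" and B: "B \<in> sets T"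
  shows "\<bar>prob {x \<in> space M. X x \<in> A \<and> Y x \<in> B}
            - prob {x \<in> space M. X x \<in> A} * prob {x \<in> space M. Y x \<in> B}\<bar>
         \<le> sqrt (1 - exp (- mutual_information (exp 1) S T X Y))"
proof -
  define J where "J = distr M (S \<Otimes>\<^sub>M T) (\<lambda>x. (X x, Y x))"
  define Q where "Q = distr M S X \<Otimes>\<^sub>M distr M T Y"
  have XY: "(\<lambda>x. (X x, Y x)) \<in> measurable M (S \<Otimes>\<^sub>M T)"
    using X Y by (rule measurable_Pair)
  interpret PX: prob_space "distr M S X" by (rule prob_space_distr[OF X])
  interpret PY: prob_space "distr M T Y" by (rule prob_space_distr[OF Y])
  have sets_Q: "sets Q = sets (S \<Otimes>\<^sub>M T)"
    unfolding Q_def by (rule sets_pair_measure_cong) simp_all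
  have "\<bar>measure J (A \<times> B) - measure Q (A \<times> B)\<bar> \<le> sqrt (1 - exp (- KL_divergence (exp 1) Q J))"
  proof (rule Bretagnolle_Huber_inequality)
    show "prob_space Q" unfolding Q_def by (rule prob_space_pair) unfold_locales
    show "prob_space J" unfolding J_def by (rule prob_space_distr[OF XY])
    show "sets J = sets Q" using sets_Q unfolding J_def by simp
    show "absolutely_continuous Q J" "integrable J (entropy_density (exp 1) Q J)"
      using MI unfolding finite_mutual_information_def J_def Q_def by auto
    show "A \<times> B \<in> sets Q" using A B sets_Q by simp
  qed
  moreover have "measure J (A \<times> B) = prob {x \<in> space M. X x \<in> A \<and> Y x \<in> B}"
    unfolding J_def using A B by (subst measure_distr[OF XY]) (auto intro!: arg_cong[where f=prob])
  moreover have "measure Q (A \<times> B) = measure (distr M S X) A * measure (distr M T Y) B"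
    unfolding Q_def measure_def using A B by (simp add: PY.emeasure_pair_measure_Times enn2real_mult)
  moreover have "measure (distr M S X) A = prob {x \<in> space M. X x \<in> A}"
    "measure (distr M T Y) B = prob {x \<in> space M. Y x \<in> B}"
    using A B by (simp_all add: measure_distr[OF X] measure_distr[OF Y] vimage_def Int_def conj_commute)
  ultimately show ?thesis
    by (simp add: mutual_information_def J_def Q_def)
qed

lemma sorted_nth_ge_iff_card_less:
  fixes L :: "'a::linorder list"
  assumes L: "sorted L" and k: "k < length L"
  shows "x \<le> L ! k \<longleftrightarrow> card {j. j < length L \<and> L ! j < x} \<le> k"
proof
  assume x: "x \<le> L ! k"
  have "j < k" if "j < length L" "L ! j < x" for j
  proof (rule ccontr)
    assume "\<not> j < k"
    then have "L ! k \<le> L ! j" using sorted_nth_mono[OF L] that(1) by simp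
    then show False using x that(2) by simp
  qed
  then have "{j. j < length L \<and> L ! j < x} \<subseteq> {..<k}" by auto
  then show "card {j. j < length L \<and> L ! j < x} \<le> k"
    using card_mono[of "{..<k}"] by fastforce
next
  assume card: "card {j. j < length L \<and> L ! j < x} \<le> k"
  show "x \<le> L ! k"
  proof (rule ccontr)
    assume "\<not> x \<le> L ! k"
    then have "{..k} \<subseteq> {j. j < length L \<and> L ! j < x}"
      using k sorted_nth_mono[OF L, of _ k] by (auto simp: not_le intro: le_less_trans)
    then have "Suc k \<le> card {j. j < length L \<and> L ! j < x}"
      using card_mono[of "{j. j < length L \<and> L ! j < x}" "{..k}"] by simp
    then show False using card by simp
  qed
qed

lemma card_less_sort_map:
  fixes sc :: "nat \<Rightarrow> 'a::linorder"
  shows "card {j. j < N \<and> sort (map sc [0..<N]) ! j < x} = card {i \<in> {..<N}. sc i < x}"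
proof -
  have "card {j. j < N \<and> sort (map sc [0..<N]) ! j < x}
      = length (filter (\<lambda>v. v < x) (sort (map sc [0..<N])))"
    by (simp add: length_filter_conv_card)
  also have "\<dots> = length (filter (\<lambda>v. v < x) (map sc [0..<N]))"
    by (metis mset_filter mset_sort size_mset)
  also have "\<dots> = card {i \<in> {..<N}. sc i < x}"
    unfolding length_filter_conv_card by (rule arg_cong[where f=card]) auto
  finally show ?thesis .
qed

lemma ereal_le_conf_quantile_iff:
  "ereal x \<le> conf_quantile \<alpha> N sc \<longleftrightarrow> card {i \<in> {..<N}. sc i < x} < conf_rank \<alpha> N"
proof -
  define k where "k = conf_rank \<alpha> N"
  have card_le: "card {i \<in> {..<N}. sc i < x} \<le> N"
    using card_mono[of "{..<N}" "{i \<in> {..<N}. sc i < x}"] by auto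
  consider "N < k" | "k = 0" | "0 < k" "k \<le> N" by linarith
  then show ?thesis
  proof cases
    case 1
    then show ?thesis using card_le by (simp add: conf_quantile_def k_def[symmetric])
  next
    case 2
    then show ?thesis by (simp add: conf_quantile_def k_def[symmetric])
  next
    case 3
    then have "x \<le> sort (map sc [0..<N]) ! (k - 1) \<longleftrightarrow> card {i \<in> {..<N}. sc i < x} \<le> k - 1"
      using sorted_nth_ge_iff_card_less[of "sort (map sc [0..<N])" "k - 1" x]
      by (simp add: card_less_sort_map)
    also have "\<dots> \<longleftrightarrow> card {i \<in> {..<N}. sc i < x} < k" using 3 by linarith
    finally show ?thesis using 3 by (simp add: conf_quantile_def k_def[symmetric])
  qed
qed

lemma card_rank_less_ge:
  fixes v :: "'a \<Rightarrow> 'b::linorder"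
  assumes U: "finite U" and k: "k \<le> card U"
  shows "k \<le> card {j \<in> U. card {i \<in> U. v i < v j} < k}"
proof (rule ccontr)
  define T where "T = {j \<in> U. card {i \<in> U. v i < v j} < k}"
  assume "\<not> k \<le> card T"
  then have T: "card T < k" by simp
  have fin_T: "finite T" using U unfolding T_def by simp
  have "\<not> U \<subseteq> T"
  proof
    assume "U \<subseteq> T"
    then have "card U \<le> card T" by (rule card_mono[OF fin_T])
    then show False using T k by simp
  qed
  \<comment> \<open>an element of U - T of minimal value has only elements of T below it\<close>
  then obtain j where j: "j \<in> U - T" and min: "\<And>i. i \<in> U - T \<Longrightarrow> \<not> v i < v j"
    using ex_min_if_finite[of "v ` (U - T)"] U by blast
  have "{i \<in> U. v i < v j} \<subseteq> T" using min by blast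
  then have "card {i \<in> U. v i < v j} \<le> card T" by (rule card_mono[OF fin_T])
  then have "j \<in> T" using T j unfolding T_def by simp
  then show False using j by simp
qed

lemma borel_measurable_card_Collect:
  assumes A: "finite A" and P: "\<And>i. i \<in> A \<Longrightarrow> {x \<in> space M. P i x} \<in> sets M"
  shows "(\<lambda>x. real (card {i \<in> A. P i x})) \<in> borel_measurable M"
proof -
  have "real (card {i \<in> A. P i x}) = (\<Sum>i\<in>A. indicator {x \<in> space M. P i x} x)"
    if "x \<in> space M" for x
  proof -
    have "real (card {i \<in> A. P i x}) = (\<Sum>i\<in>A. if P i x then 1 else 0)"
      using sum.inter_filter[OF A, of "\<lambda>_. 1::real" "\<lambda>i. P i x"] by simp
    also have "\<dots> = (\<Sum>i\<in>A. indicator {x \<in> space M. P i x} x)"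
      using that by (intro sum.cong) (auto simp: indicator_def)
    finally show ?thesis .
  qed
  moreover have "(\<lambda>x. \<Sum>i\<in>A. indicator {x \<in> space M. P i x} x :: real) \<in> borel_measurable M"
    using P by (intro borel_measurable_sum borel_measurable_indicator)
  ultimately show ?thesis by (simp cong: measurable_cong)
qed

lemma measure_PiM_reindex:
  assumes M: "prob_space M" and \<tau>: "bij_betw \<tau> I I" and E: "E \<in> sets (PiM I (\<lambda>_. M))"
  shows "measure (PiM I (\<lambda>_. M)) {Z \<in> space (PiM I (\<lambda>_. M)). (\<lambda>n\<in>I. Z (\<tau> n)) \<in> E}
    = measure (PiM I (\<lambda>_. M)) E"
proof -
  have \<tau>_Pi: "\<tau> \<in> I \<rightarrow> I" using \<tau> by (auto simp: bij_betw_def)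
  have meas: "(\<lambda>Z. \<lambda>n\<in>I. Z (\<tau> n)) \<in> measurable (PiM I (\<lambda>_. M)) (PiM I (\<lambda>_. M))"
    using \<tau>_Pi by (intro measurable_restrict measurable_component_singleton) auto
  have "distr (PiM I (\<lambda>_. M)) (PiM I (\<lambda>_. M)) (\<lambda>Z. \<lambda>n\<in>I. Z (\<tau> n)) = PiM I (\<lambda>_. M)"
    using distr_PiM_reindex[of I "\<lambda>_. M" \<tau> I] M \<tau> \<tau>_Pi by (simp add: bij_betw_def)
  then show ?thesis
    using measure_distr[OF meas E] by (simp add: vimage_def Int_def conj_commute)
qed

lemma measure_PiM_component_Collect:
  assumes M: "prob_space M" and i: "i \<in> I" and A: "A \<in> sets M"
  shows "measure (PiM I (\<lambda>_. M)) {Z \<in> space (PiM I (\<lambda>_. M)). Z i \<in> A} = measure M A"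
proof -
  have "measure M A = measure (distr (PiM I (\<lambda>_. M)) M (\<lambda>Z. Z i)) A"
    using distr_PiM_component[of I "\<lambda>_. M" i] M i by simp
  also have "\<dots> = measure (PiM I (\<lambda>_. M)) {Z \<in> space (PiM I (\<lambda>_. M)). Z i \<in> A}"
    using i A by (subst measure_distr) (auto simp: vimage_def Int_def conj_commute)
  finally show ?thesis by simp
qed

lemma sets_PiM_card_less:
  fixes s :: "'a \<Rightarrow> real"
  assumes s[measurable]: "s \<in> borel_measurable M" and J: "finite J" "J \<subseteq> I" and j: "j \<in> I"
  shows "{Z \<in> space (PiM I (\<lambda>_. M)). card {i \<in> J. s (Z i) < s (Z j)} < k} \<in> sets (PiM I (\<lambda>_. M))"
proof -
  have "(\<lambda>Z. real (card {i \<in> J. s (Z i) < s (Z j)})) \<in> borel_measurable (PiM I (\<lambda>_. M))"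
  proof (rule borel_measurable_card_Collect[OF J(1)])
    fix i assume "i \<in> J"
    with J have "i \<in> I" by auto
    with j show "{Z \<in> space (PiM I (\<lambda>_. M)). s (Z i) < s (Z j)} \<in> sets (PiM I (\<lambda>_. M))"
      by measurable
  qed
  from borel_measurable_less[OF this borel_measurable_const[of "real k"]] show ?thesis
    unfolding of_nat_less_iff .
qed

lemma measure_PiM_rank_less_swap:
  fixes s :: "'a \<Rightarrow> real" and N :: nat
  assumes \<pi>: "prob_space \<pi>" and s: "s \<in> borel_measurable \<pi>" and j: "j \<in> {0..N}"
  shows "measure (PiM {0..N} (\<lambda>_. \<pi>)) {Z \<in> space (PiM {0..N} (\<lambda>_. \<pi>)). card {i \<in> {0..N}. s (Z i) < s (Z j)} < k}
    = measure (PiM {0..N} (\<lambda>_. \<pi>)) {Z \<in> space (PiM {0..N} (\<lambda>_. \<pi>)). card {i \<in> {0..N}. s (Z i) < s (Z N)} < k}"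
proof -
  define P where "P = PiM {0..N} (\<lambda>_. \<pi>)"
  define \<tau> where "\<tau> = Transposition.transpose j N"
  have bij: "bij_betw \<tau> {0..N} {0..N}" using j by (simp add: \<tau>_def)
  have card_eq: "card {i \<in> {0..N}. s ((\<lambda>n\<in>{0..N}. Z (\<tau> n)) i) < s ((\<lambda>n\<in>{0..N}. Z (\<tau> n)) N)}
      = card {i \<in> {0..N}. s (Z i) < s (Z j)}" for Z
    by (rule bij_betw_same_card, rule bij_betw_Collect[OF bij]) (simp add: \<tau>_def)
  have "(\<lambda>n\<in>{0..N}. Z (\<tau> n)) \<in> space P" if "Z \<in> space P" for Z
    using that bij by (auto simp: P_def space_PiM PiE_iff bij_betw_def)
  then have swap: "{Z \<in> space P. (\<lambda>n\<in>{0..N}. Z (\<tau> n)) \<in> {Z \<in> space P. card {i \<in> {0..N}. s (Z i) < s (Z N)} < k}}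
      = {Z \<in> space P. card {i \<in> {0..N}. s (Z i) < s (Z j)} < k}"
    unfolding mem_Collect_eq card_eq by blast
  have sets: "{Z \<in> space P. card {i \<in> {0..N}. s (Z i) < s (Z N)} < k} \<in> sets P"
    unfolding P_def by (rule sets_PiM_card_less[OF s]) auto
  have "measure P {Z \<in> space P. card {i \<in> {0..N}. s (Z i) < s (Z j)} < k}
      = measure P {Z \<in> space P. (\<lambda>n\<in>{0..N}. Z (\<tau> n)) \<in> {Z \<in> space P. card {i \<in> {0..N}. s (Z i) < s (Z N)} < k}}"
    by (simp only: swap)
  also have "\<dots> = measure P {Z \<in> space P. card {i \<in> {0..N}. s (Z i) < s (Z N)} < k}"
    unfolding P_def by (rule measure_PiM_reindex[OF \<pi> bij sets[unfolded P_def]])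
  finally show ?thesis unfolding P_def .
qed

lemma prob_rank_last_less_ge:
  fixes s :: "'a \<Rightarrow> real"
  assumes \<pi>: "prob_space \<pi>" and s: "s \<in> borel_measurable \<pi>" and k: "k \<le> N + 1"
  shows "real k \<le> real (N + 1) * measure (PiM {0..N} (\<lambda>_. \<pi>))
      {Z \<in> space (PiM {0..N} (\<lambda>_. \<pi>)). card {i \<in> {0..N}. s (Z i) < s (Z N)} < k}"
proof -
  define P where "P = PiM {0..N} (\<lambda>_. \<pi>)"
  interpret P: prob_space P unfolding P_def using \<pi> by (rule prob_space_PiM)
  define Ev where "Ev j = {Z \<in> space P. card {i \<in> {0..N}. s (Z i) < s (Z j)} < k}" for j
  have Ev_sets: "Ev j \<in> sets P" if "j \<in> {0..N}" for j
    unfolding Ev_def P_def using that by (intro sets_PiM_card_less[OF s]) auto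
  have Ev_int: "integrable P (indicator (Ev j) :: _ \<Rightarrow> real)" if "j \<in> {0..N}" for j
    using Ev_sets[OF that] by (simp add: P.emeasure_finite less_top[symmetric] integrable_real_indicator)
  \<comment> \<open>pointwise at least k of the events Ev j occur, and by exchangeability
    they all have the probability of Ev N\<close>
  have "real k \<le> (\<Sum>j\<in>{0..N}. indicator (Ev j) Z)" if "Z \<in> space P" for Z
  proof -
    have "k \<le> card {j \<in> {0..N}. card {i \<in> {0..N}. s (Z i) < s (Z j)} < k}"
      using k by (intro card_rank_less_ge) simp_all
    also have "\<dots> = card {j \<in> {0..N}. Z \<in> Ev j}" using that by (simp add: Ev_def)
    finally show ?thesis by (simp add: indicator_def sum.If_cases Int_def)
  qed
  then have "real k \<le> (\<integral>Z. (\<Sum>j\<in>{0..N}. indicator (Ev j) Z) \<partial>P)"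
    using Ev_int by (intro P.integral_ge_const AE_I2 Bochner_Integration.integrable_sum) auto
  also have "\<dots> = (\<Sum>j\<in>{0..N}. measure P (Ev j))"
    using Ev_int Ev_sets by (simp add: integral_sum Int_absorb2 sets.sets_into_space)
  also have "\<dots> = (\<Sum>j\<in>{0..N}. measure P (Ev N))"
  proof (rule sum.cong[OF refl])
    fix j assume "j \<in> {0..N}"
    then show "measure P (Ev j) = measure P (Ev N)"
      unfolding P_def Ev_def by (rule measure_PiM_rank_less_swap[OF \<pi> s])
  qed
  also have "\<dots> = real (N + 1) * measure P (Ev N)" by simp
  finally show ?thesis unfolding P_def Ev_def .
qed

lemma
  fixes M :: "'a measure" and N :: nat
  assumes M: "prob_space M" and E: "E \<in> sets (PiM {0..N} (\<lambda>_. M))"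
  shows emeasure_PiM_last_fibers: "emeasure (PiM {0..N} (\<lambda>_. M)) E
      = (\<integral>\<^sup>+X. emeasure M {x \<in> space M. X(N := x) \<in> E} \<partial>PiM {0..<N} (\<lambda>_. M))"
    and borel_measurable_PiM_last_fibers:
      "(\<lambda>X. emeasure M {x \<in> space M. X(N := x) \<in> E}) \<in> borel_measurable (PiM {0..<N} (\<lambda>_. M))"
proof -
  interpret prob_space M by fact
  interpret product_sigma_finite "\<lambda>_. M" by unfold_locales
  have ins: "{0..N} = insert N {0..<N}" by auto
  have upd: "(\<lambda>(X, x). X(N := x)) \<in> measurable (PiM {0..<N} (\<lambda>_. M) \<Otimes>\<^sub>M M) (PiM {0..N} (\<lambda>_. M))"
    using measurable_add_dim[of N "{0..<N}" "\<lambda>_. M"] by (simp add: ins)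
  have fiber: "(\<integral>\<^sup>+x. indicator E (X(N := x)) \<partial>M) = emeasure M {x \<in> space M. X(N := x) \<in> E}"
    if X: "X \<in> space (PiM {0..<N} (\<lambda>_. M))" for X
  proof -
    have "(\<lambda>x. X(N := x)) \<in> measurable M (PiM {0..N} (\<lambda>_. M))"
      using measurable_Pair2[OF upd X] by simp
    from measurable_sets[OF this E] have "{x \<in> space M. X(N := x) \<in> E} \<in> sets M"
      by (simp add: vimage_def Int_def conj_commute)
    have "(\<integral>\<^sup>+x. indicator E (X(N := x)) \<partial>M) = (\<integral>\<^sup>+x. indicator {x \<in> space M. X(N := x) \<in> E} x \<partial>M)"
      by (rule nn_integral_cong) (auto split: split_indicator)
    also have "\<dots> = emeasure M {x \<in> space M. X(N := x) \<in> E}"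
      by (rule nn_integral_indicator) fact
    finally show ?thesis .
  qed
  have ind: "indicator E \<in> borel_measurable (PiM (insert N {0..<N}) (\<lambda>_. M))"
    using E by (simp add: ins)
  have "emeasure (PiM {0..N} (\<lambda>_. M)) E = (\<integral>\<^sup>+Z. indicator E Z \<partial>PiM (insert N {0..<N}) (\<lambda>_. M))"
    using E by (simp add: ins)
  also have "\<dots> = (\<integral>\<^sup>+X. (\<integral>\<^sup>+x. indicator E (X(N := x)) \<partial>M) \<partial>PiM {0..<N} (\<lambda>_. M))"
    by (rule product_nn_integral_insert[OF _ _ ind]) auto
  also have "\<dots> = (\<integral>\<^sup>+X. emeasure M {x \<in> space M. X(N := x) \<in> E} \<partial>PiM {0..<N} (\<lambda>_. M))"
    by (intro nn_integral_cong fiber)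
  finally show "emeasure (PiM {0..N} (\<lambda>_. M)) E
      = (\<integral>\<^sup>+X. emeasure M {x \<in> space M. X(N := x) \<in> E} \<partial>PiM {0..<N} (\<lambda>_. M))" .
  have "(\<lambda>X. \<integral>\<^sup>+x. indicator E (X(N := x)) \<partial>M) \<in> borel_measurable (PiM {0..<N} (\<lambda>_. M))"
    using measurable_compose[OF upd ind[folded ins]]
    by (intro borel_measurable_nn_integral) (simp add: case_prod_unfold)
  then show "(\<lambda>X. emeasure M {x \<in> space M. X(N := x) \<in> E}) \<in> borel_measurable (PiM {0..<N} (\<lambda>_. M))"
    by (simp add: fiber cong: measurable_cong)
qed

lemma measure_PiM_le_of_last_fibers:
  fixes M :: "'a measure" and N :: nat and c D :: real
  assumes M: "prob_space M" and E: "E \<in> sets (PiM {0..N} (\<lambda>_. M))" and F: "F \<in> sets (PiM {0..N} (\<lambda>_. M))"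
    and c: "0 \<le> c" and D: "0 \<le> D"
    and le: "\<And>X. X \<in> space (PiM {0..<N} (\<lambda>_. M)) \<Longrightarrow>
      c * measure M {x \<in> space M. X(N := x) \<in> E} \<le> measure M {x \<in> space M. X(N := x) \<in> F} + D"
  shows "c * measure (PiM {0..N} (\<lambda>_. M)) E \<le> measure (PiM {0..N} (\<lambda>_. M)) F + D"
proof -
  interpret M: prob_space M by fact
  interpret P: prob_space "PiM {0..N} (\<lambda>_. M)" using M by (rule prob_space_PiM)
  interpret Pc: prob_space "PiM {0..<N} (\<lambda>_. M)" using M by (rule prob_space_PiM)
  define e where "e X = emeasure M {x \<in> space M. X(N := x) \<in> E}" for X
  define f where "f X = emeasure M {x \<in> space M. X(N := x) \<in> F}" for X
  have "ennreal c * emeasure (PiM {0..N} (\<lambda>_. M)) E = (\<integral>\<^sup>+X. ennreal c * e X \<partial>PiM {0..<N} (\<lambda>_. M))"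
    unfolding emeasure_PiM_last_fibers[OF M E] e_def
    by (rule nn_integral_cmult[symmetric, OF borel_measurable_PiM_last_fibers[OF M E]])
  also have "\<dots> \<le> (\<integral>\<^sup>+X. f X + ennreal D \<partial>PiM {0..<N} (\<lambda>_. M))"
  proof (rule nn_integral_mono)
    fix X assume "X \<in> space (PiM {0..<N} (\<lambda>_. M))"
    from le[OF this] have "ennreal (c * measure M {x \<in> space M. X(N := x) \<in> E})
        \<le> ennreal (measure M {x \<in> space M. X(N := x) \<in> F} + D)"
      by (rule ennreal_leI)
    then show "ennreal c * e X \<le> f X + ennreal D"
      using c D unfolding e_def f_def M.emeasure_eq_measure by (simp add: ennreal_mult ennreal_plus)
  qed
  also have "\<dots> = emeasure (PiM {0..N} (\<lambda>_. M)) F + ennreal D"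
    unfolding f_def emeasure_PiM_last_fibers[OF M F]
    by (subst nn_integral_add) (simp_all add: borel_measurable_PiM_last_fibers[OF M F] Pc.emeasure_space_1)
  finally have "ennreal (c * measure (PiM {0..N} (\<lambda>_. M)) E)
      \<le> ennreal (measure (PiM {0..N} (\<lambda>_. M)) F + D)"
    using c D by (simp add: P.emeasure_eq_measure ennreal_mult ennreal_plus)
  then show ?thesis
    using D by (subst (asm) ennreal_le_iff) auto
qed

lemma prob_rank_last_less_and_in_ge:
  fixes s :: "'a \<Rightarrow> real" and N k :: nat and D :: real
  assumes \<pi>: "prob_space \<pi>" and s: "s \<in> borel_measurable \<pi>" and A: "A \<in> sets \<pi>"
    and k: "k \<le> N + 1" and D: "0 \<le> D"
    and dep: "\<And>B. B \<in> sets borel \<Longrightarrow>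
      measure \<pi> A * measure \<pi> {x \<in> space \<pi>. s x \<in> B} \<le> measure \<pi> {x \<in> A. s x \<in> B} + D"
  shows "measure \<pi> A * real k / real (N + 1) - D \<le> measure (PiM {0..N} (\<lambda>_. \<pi>))
      {Z \<in> space (PiM {0..N} (\<lambda>_. \<pi>)). card {i \<in> {..<N}. s (Z i) < s (Z N)} < k \<and> Z N \<in> A}"
proof -
  interpret prob_space \<pi> by fact
  define P where "P = PiM {0..N} (\<lambda>_. \<pi>)"
  interpret P: prob_space P unfolding P_def using \<pi> by (rule prob_space_PiM)
  define C where "C = {Z \<in> space P. card {i \<in> {..<N}. s (Z i) < s (Z N)} < k}"
  define E where "E = {Z \<in> space P. card {i \<in> {..<N}. s (Z i) < s (Z N)} < k \<and> Z N \<in> A}"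
  have C_sets: "C \<in> sets P" unfolding C_def P_def by (rule sets_PiM_card_less[OF s]) auto
  have "{Z \<in> space P. Z N \<in> A} \<in> sets P" unfolding P_def using A by measurable
  moreover have "E = C \<inter> {Z \<in> space P. Z N \<in> A}" unfolding C_def E_def by blast
  ultimately have E_sets: "E \<in> sets P" using C_sets by auto
  have "{i \<in> {0..N}. s (Z i) < s (Z N)} = {i \<in> {..<N}. s (Z i) < s (Z N)}" for Z
    by (auto simp: le_less)
  then have "real k \<le> real (N + 1) * measure P C"
    using prob_rank_last_less_ge[OF \<pi> s k] by (simp add: P_def C_def)
  then have C_ge: "real k / real (N + 1) \<le> measure P C"
    by (simp add: divide_le_eq mult.commute)
  have "measure \<pi> A * measure P C \<le> measure P E + D"
    unfolding P_def
  proof (rule measure_PiM_le_of_last_fibers[OF \<pi>])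
    fix X assume X: "X \<in> space (PiM {0..<N} (\<lambda>_. \<pi>))"
    define B where "B = {r. card {i \<in> {..<N}. s (X i) < r} < k}"
    have "(\<lambda>r. real (card {i \<in> {..<N}. s (X i) < r})) \<in> borel_measurable borel"
      by (rule borel_measurable_card_Collect) auto
    from borel_measurable_less[OF this borel_measurable_const[of "real k"]]
    have B_sets: "B \<in> sets borel" unfolding B_def of_nat_less_iff by simp
    have upd: "X(N := x) \<in> space P" if "x \<in> space \<pi>" for x
      using X that by (auto simp: P_def space_PiM PiE_iff extensional_def)
    have "{i \<in> {..<N}. s ((X(N := x)) i) < s ((X(N := x)) N)} = {i \<in> {..<N}. s (X i) < s x}" for x
      by auto
    then have "{x \<in> space \<pi>. X(N := x) \<in> C} = {x \<in> space \<pi>. s x \<in> B}"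
      "{x \<in> space \<pi>. X(N := x) \<in> E} = {x \<in> A. s x \<in> B}"
      using upd sets.sets_into_space[OF A] by (auto simp: C_def E_def B_def)
    then show "measure \<pi> A * measure \<pi> {x \<in> space \<pi>. X(N := x) \<in> C}
        \<le> measure \<pi> {x \<in> space \<pi>. X(N := x) \<in> E} + D"
      using dep[OF B_sets] by simp
  qed (use C_sets E_sets D in \<open>simp_all add: P_def\<close>)
  moreover have "measure \<pi> A * (real k / real (N + 1)) \<le> measure \<pi> A * measure P C"
    using C_ge by (intro mult_left_mono) simp_all
  ultimately have "measure \<pi> A * (real k / real (N + 1)) - D \<le> measure P E" by linarith
  then show ?thesis by (simp add: P_def E_def)
qed

lemma conf_quantile_coverage_ge:
  fixes s :: "'a \<Rightarrow> real" and N :: nat and \<alpha> \<rho> D :: real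
  assumes \<pi>: "prob_space \<pi>" and s: "s \<in> borel_measurable \<pi>" and A: "A \<in> sets \<pi>" and \<alpha>: "0 \<le> \<alpha>"
    and dep: "\<And>B. B \<in> sets borel \<Longrightarrow>
      measure \<pi> A * measure \<pi> {x \<in> space \<pi>. s x \<in> B} \<le> measure \<pi> {x \<in> A. s x \<in> B} + D"
    and \<rho>: "0 < \<rho>" "\<rho> < measure \<pi> A"
  shows "1 - (\<alpha> + D / \<rho>) \<le> measure (PiM {0..N} (\<lambda>_. \<pi>))
        {Z \<in> space (PiM {0..N} (\<lambda>_. \<pi>)). ereal (s (Z N)) \<le> conf_quantile \<alpha> N (\<lambda>i. s (Z i)) \<and> Z N \<in> A}
      / measure (PiM {0..N} (\<lambda>_. \<pi>)) {Z \<in> space (PiM {0..N} (\<lambda>_. \<pi>)). Z N \<in> A}"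
proof -
  interpret prob_space \<pi> by fact
  define P where "P = PiM {0..N} (\<lambda>_. \<pi>)"
  define p where "p = measure \<pi> A"
  define k where "k = conf_rank \<alpha> N"
  have p: "0 < p" using \<rho> by (simp add: p_def)
  have D: "0 \<le> D" using dep[of UNIV] A by (simp add: prob_space)
  have "(1 - \<alpha>) * (real N + 1) = real N + 1 - \<alpha> * (real N + 1)" by (simp add: algebra_simps)
  moreover have "0 \<le> \<alpha> * (real N + 1)" using \<alpha> by simp
  ultimately have "(1 - \<alpha>) * (real N + 1) \<le> real N + 1" by linarith
  then have k: "k \<le> N + 1"
    unfolding k_def conf_rank_def nat_le_iff ceiling_le_iff of_int_of_nat_eq by (simp only: of_nat_add of_nat_1)
  have "(1 - \<alpha>) * (real N + 1) \<le> real k" unfolding k_def conf_rank_def by (rule real_nat_ceiling_ge)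
  then have k_ge: "1 - \<alpha> \<le> real k / real (N + 1)" by (subst pos_le_divide_eq) (auto simp: add.commute)
  have den: "measure P {Z \<in> space P. Z N \<in> A} = p"
    unfolding P_def p_def by (rule measure_PiM_component_Collect[OF \<pi> _ A]) simp
  define Cov where "Cov = {Z \<in> space P. card {i \<in> {..<N}. s (Z i) < s (Z N)} < k \<and> Z N \<in> A}"
  have num: "{Z \<in> space P. ereal (s (Z N)) \<le> conf_quantile \<alpha> N (\<lambda>i. s (Z i)) \<and> Z N \<in> A} = Cov"
    by (simp add: Cov_def k_def ereal_le_conf_quantile_iff)
  have cov: "p * real k / real (N + 1) - D \<le> measure P Cov"
    using prob_rank_last_less_and_in_ge[OF \<pi> s A k D dep] by (simp add: p_def P_def Cov_def)
  have "1 - (\<alpha> + D / \<rho>) \<le> 1 - (\<alpha> + D / p)"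
    using D \<rho> by (simp add: p_def divide_left_mono)
  also have "\<dots> = (p * (1 - \<alpha>) - D) / p" using p by (simp add: field_simps)
  also have "\<dots> \<le> (p * real k / real (N + 1) - D) / p"
    using k_ge p by (intro divide_right_mono diff_right_mono) (simp_all add: mult_left_mono flip: times_divide_eq_right)
  also have "\<dots> \<le> measure P Cov / p" using cov p by (simp add: divide_right_mono)
  finally show ?thesis by (simp add: num den flip: P_def)
qed

lemma conf_set_coverage_ge:
  fixes MX :: "'x measure" and MY :: "'y measure" and \<pi> :: "('x \<times> 'y) measure"
    and s :: "'x \<times> 'y \<Rightarrow> real" and N :: nat and \<alpha> \<rho> D :: real
  assumes \<pi>: "prob_space \<pi>" and pi_sets: "sets \<pi> = sets (MX \<Otimes>\<^sub>M MY)" and s: "s \<in> borel_measurable \<pi>"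
    and \<alpha>: "0 \<le> \<alpha>" and \<rho>: "0 < \<rho>"
    and dep: "\<And>\<omega> B. \<omega> \<in> sets MX \<Longrightarrow> B \<in> sets borel \<Longrightarrow>
      measure \<pi> {z \<in> space \<pi>. fst z \<in> \<omega>} * measure \<pi> {z \<in> space \<pi>. s z \<in> B}
        \<le> measure \<pi> {z \<in> space \<pi>. fst z \<in> \<omega> \<and> s z \<in> B} + D"
  shows "\<forall>\<omega> \<in> sets MX.
     measure \<pi> {z \<in> space \<pi>. fst z \<in> \<omega>} > \<rho> \<longrightarrow>
     measure (PiM {0..N} (\<lambda>_. \<pi>))
         {Z \<in> space (PiM {0..N} (\<lambda>_. \<pi>)).
            snd (Z N) \<in> conf_set s MY \<alpha> N Z (fst (Z N)) \<and> fst (Z N) \<in> \<omega>}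
       / measure (PiM {0..N} (\<lambda>_. \<pi>)) {Z \<in> space (PiM {0..N} (\<lambda>_. \<pi>)). fst (Z N) \<in> \<omega>}
     \<ge> 1 - (\<alpha> + D / \<rho>)"
proof (intro ballI impI)
  fix \<omega> assume \<omega>: "\<omega> \<in> sets MX" and \<rho>_lt: "\<rho> < measure \<pi> {z \<in> space \<pi>. fst z \<in> \<omega>}"
  define A where "A = {z \<in> space \<pi>. fst z \<in> \<omega>}"
  have "fst \<in> measurable \<pi> MX" by (simp add: measurable_cong_sets[OF pi_sets refl])
  then have A_sets: "A \<in> sets \<pi>" unfolding A_def using \<omega> by measurable
  have "{x \<in> A. s x \<in> B} = {z \<in> space \<pi>. fst z \<in> \<omega> \<and> s z \<in> B}" for B by (auto simp: A_def)
  then have dep_A: "measure \<pi> A * measure \<pi> {x \<in> space \<pi>. s x \<in> B} \<le> measure \<pi> {x \<in> A. s x \<in> B} + D"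
    if "B \<in> sets borel" for B
    using dep[OF \<omega> that] by (simp only: A_def)
  have ZN: "Z N \<in> space \<pi>" if "Z \<in> space (PiM {0..N} (\<lambda>_. \<pi>))" for Z
    using that by (auto simp: space_PiM PiE_iff)
  have ZN_snd: "snd (Z N) \<in> space MY" if "Z \<in> space (PiM {0..N} (\<lambda>_. \<pi>))" for Z
    using ZN[OF that] sets_eq_imp_space_eq[OF pi_sets] by (auto simp: space_pair_measure mem_Times_iff)
  have "{Z \<in> space (PiM {0..N} (\<lambda>_. \<pi>)). snd (Z N) \<in> conf_set s MY \<alpha> N Z (fst (Z N)) \<and> fst (Z N) \<in> \<omega>}
      = {Z \<in> space (PiM {0..N} (\<lambda>_. \<pi>)). ereal (s (Z N)) \<le> conf_quantile \<alpha> N (\<lambda>i. s (Z i)) \<and> Z N \<in> A}"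
    "{Z \<in> space (PiM {0..N} (\<lambda>_. \<pi>)). fst (Z N) \<in> \<omega>} = {Z \<in> space (PiM {0..N} (\<lambda>_. \<pi>)). Z N \<in> A}"
    unfolding conf_set_def A_def using ZN ZN_snd by auto
  then show "measure (PiM {0..N} (\<lambda>_. \<pi>))
         {Z \<in> space (PiM {0..N} (\<lambda>_. \<pi>)).
            snd (Z N) \<in> conf_set s MY \<alpha> N Z (fst (Z N)) \<and> fst (Z N) \<in> \<omega>}
       / measure (PiM {0..N} (\<lambda>_. \<pi>)) {Z \<in> space (PiM {0..N} (\<lambda>_. \<pi>)). fst (Z N) \<in> \<omega>}
     \<ge> 1 - (\<alpha> + D / \<rho>)"
    using conf_quantile_coverage_ge[OF \<pi> s A_sets \<alpha> dep_A \<rho>] \<rho>_lt by (simp add: A_def)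
qed

theorem proposition2:
  fixes MX :: "'x measure" and MY :: "'y measure" and \<pi> :: "('x \<times> 'y) measure"
    and s :: "'x \<times> 'y \<Rightarrow> real" and N :: nat and \<alpha> \<rho> :: real
  assumes pi_prob: "prob_space \<pi>"
    and pi_sets: "sets \<pi> = sets (MX \<Otimes>\<^sub>M MY)"
    and s_meas: "s \<in> borel_measurable (MX \<Otimes>\<^sub>M MY)"
    and N_pos: "N \<ge> 1"
    and alpha: "0 \<le> \<alpha>" "\<alpha> \<le> 1"
    and MI_fin: "prob_space.finite_mutual_information \<pi> (exp 1) MX borel fst s"
    and rho: "0 < \<rho>" "\<rho> \<le> 1"
  shows "\<forall>\<omega> \<in> sets MX.
     measure \<pi> {z \<in> space \<pi>. fst z \<in> \<omega>} > \<rho> \<longrightarrow>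
     measure (PiM {0..N} (\<lambda>_. \<pi>))
         {Z \<in> space (PiM {0..N} (\<lambda>_. \<pi>)).
            snd (Z N) \<in> conf_set s MY \<alpha> N Z (fst (Z N)) \<and> fst (Z N) \<in> \<omega>}
       / measure (PiM {0..N} (\<lambda>_. \<pi>)) {Z \<in> space (PiM {0..N} (\<lambda>_. \<pi>)). fst (Z N) \<in> \<omega>}
     \<ge> 1 - (\<alpha> + sqrt (1 - exp (- prob_space.mutual_information \<pi> (exp 1) MX borel fst s)) / \<rho>)"
proof -
  interpret prob_space \<pi> by (rule pi_prob)
  have fst_meas: "fst \<in> measurable \<pi> MX" and s_meas': "s \<in> borel_measurable \<pi>"
    using s_meas by (simp_all add: measurable_cong_sets[OF pi_sets refl])
  have "measure \<pi> {z \<in> space \<pi>. fst z \<in> \<omega>} * measure \<pi> {z \<in> space \<pi>. s z \<in> B}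
      \<le> measure \<pi> {z \<in> space \<pi>. fst z \<in> \<omega> \<and> s z \<in> B}
        + sqrt (1 - exp (- mutual_information (exp 1) MX borel fst s))"
    if "\<omega> \<in> sets MX" "B \<in> sets borel" for \<omega> B
    using prob_joint_minus_product_le_mutual_information[OF fst_meas s_meas' MI_fin that]
    unfolding abs_le_iff by linarith
  then show ?thesis by (rule conf_set_coverage_ge[OF pi_prob pi_sets s_meas' alpha(1) rho(1)])
qed

end
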